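(* Let $B=\bigoplus_{i\in\mathbb{Z}}\mathbb{Z}_2$ and let $L_2=B\rtimes\mathbb{Z}$ be the lamplighter group, with elements written $((x_i),k)$ and multiplication $((x_i),k)\cdot((y_i),\ell)=((x_i+y_{i-k})_i,\,k+\ell)$. Equip $L_2$ with the word metric with respect to the generating set $\{t,at\}$, where $t=(0,1)$ and $at=(e_0,1)$ ($e_0$ the sequence with a single $1$ at index $0$); the corresponding Cayley graph is the Diestel–Leader graph $DL(2,2)$. Let $\Psi:L_2\to L_2$ be an isometry that is pattern preserving, i.e. there are a permutation $\sigma$ of the set of left cosets of $\langle t\rangle$ and a constant $C'\ge 0$ with $d_{\mathcal H}(\Psi(g\langle t\rangle),\sigma(g\langle t\rangle))<C'$ for all $g\in L_2$. Identify the left coset $((x_i),k)\langle t\rangle$ with $(x_i)\in B$, and let $\psi:B\to B$ be the induced permutation. Then there is $g=((z_i),k)\in L_2$ such that either $\psi=\lambda_g$ or $\psi=\lambda_g\circ\iota$, where $\lambda_g(x)=(z_i+x_{i-k})_i$ is the map induced by left multiplication by $g$ and $\iota((x_i)_i)=(x_{-i})_i$. In particular $\psi$ is a generalized affine map.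
   Context: $d_{\mathcal H}$ denotes Hausdorff distance. An affine map of $B$ is a map $x\mapsto\varphi(x)+c$ with $\varphi$ a group automorphism of $B$ and $c\in B$. A map of $B$ is generalized affine if it is the composition of an affine map of $B$ with a shift map $(x_i)\mapsto(x_{i+k})$ for some $k\in\mathbb{Z}$. *)

theory Defs
  imports "HOL-Library.Extended_Real"
begin

text \<open>Z_2 is modelled by bool with addition = exclusive or.
  B = finitely supported functions int => bool. Elements of L_2 are pairs (x,k).\<close>

type_synonym lam = "(int \<Rightarrow> bool) \<times> int"

definition Bset :: "(int \<Rightarrow> bool) set" where
  "Bset = {x. finite {i. x i}}"

definition L2 :: "lam set" where
  "L2 = Bset \<times> UNIV"

definition lmul :: "lam \<Rightarrow> lam \<Rightarrow> lam" where
  "lmul g h = (\<lambda>i. fst g i \<noteq> fst h (i - snd g), snd g + snd h)"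

definition linv :: "lam \<Rightarrow> lam" where
  "linv g = (\<lambda>i. fst g (i + snd g), - snd g)"

definition tgen :: lam where
  "tgen = (\<lambda>_. False, 1)"

definition atgen :: lam where
  "atgen = (\<lambda>i. i = 0, 1)"

definition gens :: "lam set" where
  "gens = {tgen, atgen, linv tgen, linv atgen}"

definition l2dist :: "lam \<Rightarrow> lam \<Rightarrow> nat" where
  "l2dist g h = (LEAST n. \<exists>ws. length ws = n \<and> set ws \<subseteq> gens \<and> foldl lmul g ws = h)"

definition tpow :: "int \<Rightarrow> lam" where
  "tpow n = (\<lambda>_. False, n)"

definition tcoset :: "lam \<Rightarrow> lam set" where
  "tcoset g = {lmul g (tpow n) | n. True}"

definition tcosets :: "lam set set" where
  "tcosets = tcoset ` L2"

definition setdist :: "lam \<Rightarrow> lam set \<Rightarrow> ereal" where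
  "setdist a S = (INF b\<in>S. ereal (real (l2dist a b)))"

definition hausdorff :: "lam set \<Rightarrow> lam set \<Rightarrow> ereal" where
  "hausdorff S T = max (SUP a\<in>S. setdist a T) (SUP b\<in>T. setdist b S)"

definition lam_map :: "lam \<Rightarrow> (int \<Rightarrow> bool) \<Rightarrow> (int \<Rightarrow> bool)" where
  "lam_map g x = (\<lambda>i. fst g i \<noteq> x (i - snd g))"

definition iota :: "(int \<Rightarrow> bool) \<Rightarrow> (int \<Rightarrow> bool)" where
  "iota x = (\<lambda>i. x (- i))"

end

theory Submission
  imports Defs
begin

(* An isometry Psi of the Cayley graph DL(2,2) preserves adjacency, and two distinct neighbours
  of a vertex have a second common neighbour exactly when they lie at the same height. Hence Psi
  transports heights affinely: the height of Psi (x, m) is c + e m with e = 1 or e = -1.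
  A path that is monotone in height never touches the lamps behind its starting height, while a
  point within distance K of (y, n) carries the lamps of y outside the window [n - K, n + K).
  Following the image of the t-line through (x, m) for K steps up and down therefore shows
  Psi (x, m) = (psi x, c + e m). Finally, the edge from (x, i) to (x + e_i, i + 1) is mapped to an
  edge, so toggling lamp i of x toggles exactly lamp c + i (if e = 1) or c - 1 - i (if e = -1)
  of psi x; this forces psi to be lambda_g or lambda_g composed with iota. *)

definition toggle :: "(int \<Rightarrow> bool) \<Rightarrow> int \<Rightarrow> (int \<Rightarrow> bool)" where
  "toggle u a = (\<lambda>i. u i \<noteq> (i = a))"

lemma toggle_apply: "toggle u a i = (if i = a then \<not> u i else u i)"
  by (simp add: toggle_def)

lemma toggle_toggle [simp]: "toggle (toggle u a) a = u"
  by (auto simp: toggle_def)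

lemma toggle_neq [simp]: "toggle u a \<noteq> u"
  by (metis toggle_apply)

lemma toggle_eq_toggle_iff [simp]: "toggle u a = toggle u b \<longleftrightarrow> a = b"
  by (metis toggle_apply)

lemma toggle_in_Bset: "u \<in> Bset \<Longrightarrow> toggle u a \<in> Bset"
proof -
  assume "u \<in> Bset"
  moreover have "{i. toggle u a i} \<subseteq> insert a {i. u i}"
    by (auto simp: toggle_apply)
  ultimately show ?thesis
    unfolding Bset_def by (auto intro: finite_subset)
qed

lemma toggle_equivariant_affine:
  assumes "\<And>x i. x \<in> Bset \<Longrightarrow> f (toggle x i) = toggle (f x) (\<pi> i)"
    and "\<And>i. \<rho> (\<pi> i) = i" "\<And>j. \<pi> (\<rho> j) = j"
    and "x \<in> Bset"
  shows "f x = (\<lambda>j. f (\<lambda>_. False) j \<noteq> x (\<rho> j))"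
proof -
  have "f (\<lambda>j. j \<in> S) = (\<lambda>j. f (\<lambda>_. False) j \<noteq> (\<rho> j \<in> S))" if "finite S" for S
    using that
  proof (induction S rule: finite_induct)
    case (insert i S)
    have "(\<lambda>j. j \<in> insert i S) = toggle (\<lambda>j. j \<in> S) i"
      using insert.hyps(2) by (auto simp: toggle_def)
    moreover have "(\<lambda>j. j \<in> S) \<in> Bset"
      using insert.hyps(1) by (simp add: Bset_def)
    ultimately have "f (\<lambda>j. j \<in> insert i S) = toggle (f (\<lambda>j. j \<in> S)) (\<pi> i)"
      using assms(1) by metis
    moreover have "\<rho> j = i \<longleftrightarrow> j = \<pi> i" for j
      using assms(2,3) by metis
    ultimately show ?case
      using insert.IH insert.hyps(2) assms(2) by (auto simp: fun_eq_iff toggle_apply)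
  qed simp
  moreover have "x = (\<lambda>j. j \<in> {j. x j})" "finite {j. x j}"
    using assms(4) by (simp_all add: Bset_def)
  ultimately show ?thesis by metis
qed

lemma lmul_tgen: "lmul (u, a) tgen = (u, a + 1)"
  by (simp add: lmul_def tgen_def)

lemma lmul_atgen: "lmul (u, a) atgen = (toggle u a, a + 1)"
  by (auto simp: lmul_def atgen_def toggle_def)

lemma lmul_linv_tgen: "lmul (u, a) (linv tgen) = (u, a - 1)"
  by (simp add: lmul_def linv_def tgen_def)

lemma lmul_linv_atgen: "lmul (u, a) (linv atgen) = (toggle u (a - 1), a - 1)"
  by (auto simp: lmul_def linv_def atgen_def toggle_def)

definition adj :: "lam \<Rightarrow> lam \<Rightarrow> bool" where
  "adj p q \<longleftrightarrow> (\<exists>s\<in>gens. q = lmul p s)"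

lemma adj_iff: "adj (u, a) q \<longleftrightarrow>
    q = (u, a + 1) \<or> q = (toggle u a, a + 1) \<or> q = (u, a - 1) \<or> q = (toggle u (a - 1), a - 1)"
  by (auto simp: adj_def gens_def lmul_tgen lmul_atgen lmul_linv_tgen lmul_linv_atgen)

lemma adj_lmul_tgen: "adj p (lmul p tgen)"
  by (auto simp: adj_def gens_def)

lemma adj_height: "adj p q \<Longrightarrow> snd q = snd p + 1 \<or> snd q = snd p - 1"
  by (cases p) (auto simp: adj_iff)

lemma adj_sym: "adj p q \<Longrightarrow> adj q p"
  by (cases p) (auto simp: adj_iff)

lemma adj_L2: "adj p q \<Longrightarrow> p \<in> L2 \<Longrightarrow> q \<in> L2"
  by (cases p) (auto simp: adj_iff L2_def toggle_in_Bset)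

lemma adj_lamps: "adj p q \<Longrightarrow> i \<noteq> min (snd p) (snd q) \<Longrightarrow> fst q i = fst p i"
  by (cases p) (auto simp: adj_iff toggle_apply)

lemma adj_lamps_toggle:
  "adj p q \<Longrightarrow> fst q \<noteq> fst p \<Longrightarrow> fst q = toggle (fst p) (min (snd p) (snd q))"
  by (cases p) (auto simp: adj_iff)

lemma common_neighbour_iff_same_height:
  assumes "adj p q1" "adj p q2" "q1 \<noteq> q2"
  shows "(\<exists>r. r \<noteq> p \<and> adj q1 r \<and> adj q2 r) \<longleftrightarrow> snd q1 = snd q2"
proof
  assume "\<exists>r. r \<noteq> p \<and> adj q1 r \<and> adj q2 r"
  then obtain r where r: "r \<noteq> p" "adj q1 r" "adj q2 r" by blast
  show "snd q1 = snd q2"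
  proof (rule ccontr)
    assume "snd q1 \<noteq> snd q2"
    then have "snd r = snd p" and "min (snd p) (snd q1) \<noteq> min (snd p) (snd q2)"
      using adj_height[OF assms(1)] adj_height[OF assms(2)] adj_height[OF r(2)] adj_height[OF r(3)]
      by auto
    then have "fst r i = fst p i" for i
      using adj_lamps[OF assms(1)] adj_lamps[OF assms(2)] adj_lamps[OF r(2)] adj_lamps[OF r(3)]
      by (metis min.commute)
    then show False
      using r(1) \<open>snd r = snd p\<close> by (simp add: prod_eq_iff fun_eq_iff)
  qed
next
  assume "snd q1 = snd q2"
  obtain u a where p: "p = (u, a)" by fastforce
  show "\<exists>r. r \<noteq> p \<and> adj q1 r \<and> adj q2 r"
    using assms \<open>snd q1 = snd q2\<close> unfolding p
    by (intro exI[of _ "(toggle u (min a (snd q1)), a)"]) (auto simp: adj_iff)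
qed

lemma adj_rtranclp_word: "adj\<^sup>*\<^sup>* p q \<Longrightarrow> \<exists>ws. set ws \<subseteq> gens \<and> foldl lmul p ws = q"
proof (induction rule: rtranclp_induct)
  case base
  show ?case by (intro exI[of _ "[]"]) simp
next
  case (step q r)
  then obtain ws s where "set ws \<subseteq> gens" "foldl lmul p ws = q" "s \<in> gens" "r = lmul q s"
    by (auto simp: adj_def)
  then show ?case by (intro exI[of _ "ws @ [s]"]) simp
qed

lemma rtranclp_adj_height: "adj\<^sup>*\<^sup>* (u, a) (u, b)"
proof (induction b rule: int_induct[of _ a])
  case (step1 i)
  then show ?case by (simp add: adj_iff rtranclp.rtrancl_into_rtrancl)
next
  case (step2 i)
  then show ?case by (simp add: adj_iff rtranclp.rtrancl_into_rtrancl)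
qed simp

lemma rtranclp_adj_toggle: "adj\<^sup>*\<^sup>* (u, a) (toggle u i, a)"
proof -
  have "adj (u, i) (toggle u i, i + 1)" by (simp add: adj_iff)
  then show ?thesis
    by (meson converse_rtranclp_into_rtranclp rtranclp_adj_height rtranclp_trans)
qed

lemma rtranclp_adj_lamps: "finite S \<Longrightarrow> adj\<^sup>*\<^sup>* (u, a) (\<lambda>j. u j \<noteq> (j \<in> S), a)"
proof (induction S rule: finite_induct)
  case (insert i S)
  have "(\<lambda>j. u j \<noteq> (j \<in> insert i S)) = toggle (\<lambda>j. u j \<noteq> (j \<in> S)) i"
    using insert.hyps(2) by (auto simp: toggle_def)
  then show ?case
    using insert.IH rtranclp_adj_toggle rtranclp_trans by metis
qed simp

lemma L2_connected:
  assumes "p \<in> L2" "q \<in> L2"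
  shows "adj\<^sup>*\<^sup>* p q"
proof -
  let ?S = "{j. fst p j \<noteq> fst q j}"
  have "?S \<subseteq> {j. fst p j} \<union> {j. fst q j}" by auto
  then have "finite ?S"
    using assms by (auto simp: L2_def Bset_def intro: finite_subset)
  moreover have "(\<lambda>j. fst p j \<noteq> (j \<in> ?S)) = fst q"
    by (simp add: fun_eq_iff) blast
  ultimately have "adj\<^sup>*\<^sup>* (fst p, snd p) (fst q, snd p)"
    using rtranclp_adj_lamps by metis
  then show ?thesis
    using rtranclp_adj_height rtranclp_trans by (metis prod.collapse)
qed

lemma l2dist_attained:
  assumes "adj\<^sup>*\<^sup>* p q"
  shows "\<exists>ws. set ws \<subseteq> gens \<and> foldl lmul p ws = q \<and> length ws = l2dist p q"
proof -
  let ?P = "\<lambda>n. \<exists>ws. length ws = n \<and> set ws \<subseteq> gens \<and> foldl lmul p ws = q"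
  obtain ws where "set ws \<subseteq> gens" "foldl lmul p ws = q"
    using adj_rtranclp_word[OF assms] by blast
  then have "?P (length ws)" by blast
  then have "?P (Least ?P)" by (rule LeastI)
  then show ?thesis unfolding l2dist_def by blast
qed

lemma l2dist_eq_1_iff:
  assumes "p \<in> L2" "q \<in> L2"
  shows "l2dist p q = 1 \<longleftrightarrow> adj p q"
proof
  assume "l2dist p q = 1"
  then obtain ws where "set ws \<subseteq> gens" "foldl lmul p ws = q" "length ws = 1"
    using l2dist_attained[OF L2_connected[OF assms]] by auto
  then show "adj p q"
    by (cases ws) (auto simp: adj_def)
next
  assume "adj p q"
  then obtain s where s: "s \<in> gens" "q = lmul p s" unfolding adj_def by blast
  have "q \<noteq> p" using adj_height[OF \<open>adj p q\<close>] by auto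
  show "l2dist p q = 1" unfolding l2dist_def
  proof (rule Least_equality)
    show "\<exists>ws. length ws = 1 \<and> set ws \<subseteq> gens \<and> foldl lmul p ws = q"
      using s by (intro exI[of _ "[s]"]) simp
  next
    fix m assume "\<exists>ws. length ws = m \<and> set ws \<subseteq> gens \<and> foldl lmul p ws = q"
    then show "1 \<le> m" using \<open>q \<noteq> p\<close> by (auto simp: Suc_le_eq)
  qed
qed

lemma foldl_lmul_lamps:
  assumes "set ws \<subseteq> gens" "i < snd p - int (length ws) \<or> snd p + int (length ws) \<le> i"
  shows "fst (foldl lmul p ws) i = fst p i"
  using assms
proof (induction ws arbitrary: p)
  case (Cons s ws)
  have "adj p (lmul p s)" using Cons.prems(1) by (auto simp: adj_def)
  then have "fst (lmul p s) i = fst p i"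
    and "i < snd (lmul p s) - int (length ws) \<or> snd (lmul p s) + int (length ws) \<le> i"
    using adj_height[of p "lmul p s"] adj_lamps[of p "lmul p s" i] Cons.prems(2) by auto
  then show ?case using Cons.IH[of "lmul p s"] Cons.prems(1) by simp
qed simp

lemma l2dist_lamps_far:
  fixes K :: nat
  assumes "p \<in> L2" "q \<in> L2" "l2dist p q \<le> K" "i < snd p - int K \<or> snd p + int K \<le> i"
  shows "fst q i = fst p i"
proof -
  obtain ws where "set ws \<subseteq> gens" "foldl lmul p ws = q" "length ws = l2dist p q"
    using l2dist_attained[OF L2_connected[OF assms(1,2)]] by blast
  then show ?thesis using foldl_lmul_lamps[of ws i p] assms(3,4) by auto
qed

lemma adj_invariant_constant:
  assumes "\<And>p q. p \<in> L2 \<Longrightarrow> adj p q \<Longrightarrow> f q = f p" "p \<in> L2" "q \<in> L2"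
  shows "f q = f p"
proof -
  have "q \<in> L2 \<and> f q = f p" if "adj\<^sup>*\<^sup>* p q" for q
    using that
  proof (induction rule: rtranclp_induct)
    case (step q r)
    then have "r \<in> L2" "f r = f q" using assms(1) adj_L2 by blast+
    then show ?case using step.IH by simp
  qed (use assms(2) in simp)
  then show ?thesis using L2_connected[OF assms(2,3)] by blast
qed

lemma path_lamp_unchanged:
  assumes "\<And>k. k < n \<Longrightarrow> adj (q k) (q (Suc k))"
    and "\<And>k. k < n \<Longrightarrow> i \<noteq> min (snd (q k)) (snd (q (Suc k)))"
  shows "fst (q n) i = fst (q 0) i"
  using assms
proof (induction n)
  case (Suc n)
  then show ?case using adj_lamps[of "q n" "q (Suc n)" i] by simp
qed simp

lemma hausdorff_less_imp_near:
  assumes "hausdorff S T < ereal C" "a \<in> S"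
  shows "\<exists>b\<in>T. real (l2dist a b) < C"
proof -
  have "setdist a T \<le> (SUP a\<in>S. setdist a T)"
    using assms(2) by (rule SUP_upper)
  also have "\<dots> \<le> hausdorff S T"
    unfolding hausdorff_def by simp
  finally have "(INF b\<in>T. ereal (real (l2dist a b))) < ereal C"
    using assms(1) unfolding setdist_def by simp
  then show ?thesis by (auto simp: INF_less_iff)
qed

lemma tcoset_eq: "tcoset g = {p. fst p = fst g}"
proof -
  have shift: "lmul g (tpow n) = (fst g, snd g + n)" for n
    by (simp add: lmul_def tpow_def)
  show ?thesis unfolding tcoset_def
  proof (intro set_eqI iffI)
    fix p :: lam
    assume "p \<in> {lmul g (tpow n) | n. True}"
    then show "p \<in> {p. fst p = fst g}" using shift by auto
  next
    fix p :: lam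
    assume "p \<in> {p. fst p = fst g}"
    then have "p = lmul g (tpow (snd p - snd g))" using shift by (simp add: prod_eq_iff)
    then show "p \<in> {lmul g (tpow n) | n. True}" by blast
  qed
qed

lemma tcosets_representative:
  assumes "T \<in> tcosets"
  shows "\<exists>y\<in>Bset. T = tcoset (y, 0)"
  using assms by (auto simp: tcosets_def L2_def tcoset_eq)

locale lamplighter_isometry =
  fixes Psi :: "lam \<Rightarrow> lam"
  assumes bij: "bij_betw Psi L2 L2"
    and isometric: "\<forall>g\<in>L2. \<forall>h\<in>L2. l2dist (Psi g) (Psi h) = l2dist g h"
begin

lemma Psi_L2: "p \<in> L2 \<Longrightarrow> Psi p \<in> L2"
  using bij bij_betwE by blast

lemma Psi_inj: "p \<in> L2 \<Longrightarrow> q \<in> L2 \<Longrightarrow> Psi p = Psi q \<longleftrightarrow> p = q"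
  using bij_betw_imp_inj_on[OF bij] by (simp add: inj_on_eq_iff)

lemma adj_Psi_iff: "p \<in> L2 \<Longrightarrow> q \<in> L2 \<Longrightarrow> adj (Psi p) (Psi q) \<longleftrightarrow> adj p q"
  using isometric by (simp add: l2dist_eq_1_iff[symmetric] Psi_L2)

lemma same_height_Psi_iff:
  assumes "p \<in> L2" "adj p q1" "adj p q2" "q1 \<noteq> q2"
  shows "snd (Psi q1) = snd (Psi q2) \<longleftrightarrow> snd q1 = snd q2"
proof -
  have L2: "q1 \<in> L2" "q2 \<in> L2" using adj_L2 assms by blast+
  have adj_image: "adj (Psi p) (Psi q1)" "adj (Psi p) (Psi q2)"
    using adj_Psi_iff assms L2 by blast+
  have "Psi q1 \<noteq> Psi q2" using Psi_inj L2 assms(4) by blast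
  then have "snd (Psi q1) = snd (Psi q2) \<longleftrightarrow>
      (\<exists>r'. r' \<noteq> Psi p \<and> adj (Psi q1) r' \<and> adj (Psi q2) r')"
    using common_neighbour_iff_same_height[OF adj_image] by simp
  also have "\<dots> \<longleftrightarrow> (\<exists>r. r \<noteq> p \<and> adj q1 r \<and> adj q2 r)"
  proof
    assume "\<exists>r'. r' \<noteq> Psi p \<and> adj (Psi q1) r' \<and> adj (Psi q2) r'"
    then obtain r' where r': "r' \<noteq> Psi p" "adj (Psi q1) r'" "adj (Psi q2) r'" by blast
    then have "r' \<in> Psi ` L2"
      using adj_L2 Psi_L2 L2(1) bij_betw_imp_surj_on[OF bij] by blast
    then obtain r where r: "r \<in> L2" "r' = Psi r" by blast
    then have "r \<noteq> p" "adj q1 r" "adj q2 r"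
      using r' adj_Psi_iff[OF L2(1) r(1)] adj_Psi_iff[OF L2(2) r(1)] by auto
    then show "\<exists>r. r \<noteq> p \<and> adj q1 r \<and> adj q2 r" by blast
  next
    assume "\<exists>r. r \<noteq> p \<and> adj q1 r \<and> adj q2 r"
    then obtain r where r: "r \<noteq> p" "adj q1 r" "adj q2 r" by blast
    then have "r \<in> L2" using adj_L2 L2 by blast
    then have "Psi r \<noteq> Psi p" "adj (Psi q1) (Psi r)" "adj (Psi q2) (Psi r)"
      using r Psi_inj[OF _ assms(1)] adj_Psi_iff L2 by auto
    then show "\<exists>r'. r' \<noteq> Psi p \<and> adj (Psi q1) r' \<and> adj (Psi q2) r'" by blast
  qed
  also have "\<dots> \<longleftrightarrow> snd q1 = snd q2"
    using common_neighbour_iff_same_height assms(2-4) by blast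
  finally show ?thesis .
qed

definition height_sign_at :: "lam \<Rightarrow> int" where
  "height_sign_at p = snd (Psi (lmul p tgen)) - snd (Psi p)"

lemma height_sign_at_cases:
  assumes "p \<in> L2"
  shows "height_sign_at p = 1 \<or> height_sign_at p = -1"
proof -
  have "adj (Psi p) (Psi (lmul p tgen))"
    using adj_Psi_iff adj_L2 adj_lmul_tgen assms by blast
  then show ?thesis using adj_height unfolding height_sign_at_def by fastforce
qed

lemma height_Psi_step:
  assumes "p \<in> L2" "adj p q"
  shows "snd (Psi q) - snd (Psi p) = height_sign_at p * (snd q - snd p)"
proof (cases "q = lmul p tgen")
  case True
  then show ?thesis by (cases p) (simp add: height_sign_at_def lmul_tgen)
next
  case False
  let ?q1 = "lmul p tgen"
  have L2: "q \<in> L2" "?q1 \<in> L2" using adj_L2 adj_lmul_tgen assms by blast+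
  have "snd ?q1 = snd p + 1" by (cases p) (simp add: lmul_tgen)
  then have same_sign: "snd (Psi q) - snd (Psi p) = height_sign_at p \<longleftrightarrow> snd q - snd p = 1"
    using same_height_Psi_iff[OF assms(1) adj_lmul_tgen assms(2)] False
    unfolding height_sign_at_def by auto
  have "adj (Psi p) (Psi q)"
    using adj_Psi_iff assms L2 by blast
  then have "snd (Psi q) - snd (Psi p) = 1 \<or> snd (Psi q) - snd (Psi p) = -1"
    using adj_height by fastforce
  moreover have "snd q - snd p = 1 \<or> snd q - snd p = -1"
    using adj_height[OF assms(2)] by auto
  moreover have "height_sign_at p = 1 \<or> height_sign_at p = -1"
    using height_sign_at_cases[OF assms(1)] .
  ultimately show ?thesis using same_sign by auto
qed

lemma height_sign_at_adj:
  assumes "p \<in> L2" "adj p q"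
  shows "height_sign_at q = height_sign_at p"
proof -
  have "q \<in> L2" using adj_L2 assms by blast
  then have "snd (Psi p) - snd (Psi q) = height_sign_at q * (snd p - snd q)"
    using height_Psi_step adj_sym assms(2) by blast
  then have "height_sign_at q * (snd q - snd p) = height_sign_at p * (snd q - snd p)"
    using height_Psi_step[OF assms] by (simp add: algebra_simps)
  moreover have "snd q \<noteq> snd p" using adj_height[OF assms(2)] by auto
  ultimately show ?thesis by simp
qed

abbreviation "height_sign \<equiv> height_sign_at (\<lambda>_. False, 0)"
abbreviation "height_shift \<equiv> snd (Psi (\<lambda>_. False, 0))"

lemma height_sign_cases: "height_sign = 1 \<or> height_sign = -1"
  by (rule height_sign_at_cases) (simp add: L2_def Bset_def)

lemma height_Psi:
  assumes "q \<in> L2"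
  shows "snd (Psi q) = height_shift + height_sign * snd q"
proof -
  let ?f = "\<lambda>q. (height_sign_at q, snd (Psi q) - height_sign_at q * snd q)"
  have "?f q = ?f (\<lambda>_. False, 0)"
  proof (rule adj_invariant_constant)
    fix p q assume "p \<in> L2" "adj p q"
    then show "?f q = ?f p"
      using height_sign_at_adj height_Psi_step by (simp add: algebra_simps)
  qed (use assms in \<open>simp_all add: L2_def Bset_def\<close>)
  then show ?thesis by auto
qed

end

locale pattern_preserving_isometry = lamplighter_isometry +
  fixes psi :: "(int \<Rightarrow> bool) \<Rightarrow> (int \<Rightarrow> bool)" and K :: nat
  assumes near_coset: "\<And>x n. x \<in> Bset \<Longrightarrow> \<exists>b\<in>L2. fst b = psi x \<and> l2dist (Psi (x, n)) b \<le> K"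
begin

lemma psi_Bset: "x \<in> Bset \<Longrightarrow> psi x \<in> Bset"
  using near_coset[of x 0] by (auto simp: L2_def)

lemma Psi_line:
  assumes "x \<in> Bset"
  shows "Psi (x, m) = (psi x, height_shift + height_sign * m)"
proof -
  let ?h = "\<lambda>m. height_shift + height_sign * m"
  have L2: "(x, j) \<in> L2" for j
    using assms by (simp add: L2_def)
  have sign_sq: "height_sign * height_sign = 1"
    using height_sign_cases by auto
  have lamp: "fst (Psi (x, m)) i = psi x i"
    if d: "d = 1 \<and> i < ?h m \<or> d = -1 \<and> ?h m \<le> i" for d i :: int
  proof -
    (* Walking K steps in direction d along the image of the t-line moves monotonically in height
      away from lamp i, so the walk never touches it, and it ends within K of a point of the coset
      of psi x, whose lamp i it must therefore share. *)
    define q where "q k = Psi (x, m + d * height_sign * int k)" for k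
    have q_height: "snd (q k) = ?h m + d * int k" for k
      unfolding q_def height_Psi[OF L2] using sign_sq by (simp add: algebra_simps)
    have "adj (x, m + d * height_sign * int k) (x, m + d * height_sign * int (Suc k))" for k
      using d height_sign_cases by (auto simp: adj_iff algebra_simps)
    then have "adj (q k) (q (Suc k))" for k
      unfolding q_def using adj_Psi_iff L2 by blast
    then have "fst (q K) i = fst (q 0) i"
      by (rule path_lamp_unchanged) (use d q_height in auto)
    moreover obtain b where "b \<in> L2" "fst b = psi x" "l2dist (q K) b \<le> K"
      using near_coset[OF assms] unfolding q_def by blast
    moreover have "q K \<in> L2"
      unfolding q_def using Psi_L2 L2 by blast
    ultimately show ?thesis
      using l2dist_lamps_far[of "q K" b K i] q_height d by (auto simp: q_def)
  qed
  have "fst (Psi (x, m)) = psi x"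
  proof
    fix i
    show "fst (Psi (x, m)) i = psi x i"
      using lamp[of 1 i] lamp[of "-1" i] by (cases "i < ?h m") auto
  qed
  then show ?thesis
    using height_Psi[OF L2] by (simp add: prod_eq_iff)
qed

lemma psi_toggle:
  assumes "x \<in> Bset"
  shows "psi (toggle x i) =
    toggle (psi x) (min (height_shift + height_sign * i) (height_shift + height_sign * (i + 1)))"
proof -
  have x': "toggle x i \<in> Bset" using assms by (rule toggle_in_Bset)
  then have L2: "(x, i) \<in> L2" "(toggle x i, i + 1) \<in> L2" "(x, i + 1) \<in> L2"
    using assms by (simp_all add: L2_def)
  have "adj (x, i) (toggle x i, i + 1)" by (simp add: adj_iff)
  then have "adj (Psi (x, i)) (Psi (toggle x i, i + 1))"
    using adj_Psi_iff L2 by blast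
  moreover have "Psi (toggle x i, i + 1) \<noteq> Psi (x, i + 1)"
    using Psi_inj L2 by simp
  ultimately show ?thesis
    using adj_lamps_toggle Psi_line assms x' by fastforce
qed

lemma psi_affine_or_reflected:
  "\<exists>z k. (z, k) \<in> L2 \<and>
    ((\<forall>x\<in>Bset. psi x = lam_map (z, k) x) \<or> (\<forall>x\<in>Bset. psi x = lam_map (z, k) (iota x)))"
proof -
  let ?z = "psi (\<lambda>_. False)"
  have z: "?z \<in> Bset" by (rule psi_Bset) (simp add: Bset_def)
  consider "height_sign = 1" | "height_sign = -1"
    using height_sign_cases by blast
  then show ?thesis
  proof cases
    case 1
    have "psi x = (\<lambda>j. ?z j \<noteq> x (j - height_shift))" if "x \<in> Bset" for x
      by (rule toggle_equivariant_affine[where \<pi> = "\<lambda>i. height_shift + i"])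
        (use psi_toggle 1 that in auto)
    then show ?thesis
      using z by (intro exI[of _ ?z] exI[of _ height_shift]) (auto simp: L2_def lam_map_def)
  next
    case 2
    have "psi x = (\<lambda>j. ?z j \<noteq> x (height_shift - 1 - j))" if "x \<in> Bset" for x
      by (rule toggle_equivariant_affine[where \<pi> = "\<lambda>i. height_shift - 1 - i"])
        (use psi_toggle 2 that in auto)
    then show ?thesis
      using z by (intro exI[of _ ?z] exI[of _ "height_shift - 1"])
        (auto simp: L2_def lam_map_def iota_def)
  qed
qed

end

theorem theorem1p1:
  fixes \<Psi> :: "lam \<Rightarrow> lam" and \<sigma> :: "lam set \<Rightarrow> lam set" and C' :: real
  assumes "bij_betw \<Psi> L2 L2"
    and "\<forall>g\<in>L2. \<forall>h\<in>L2. l2dist (\<Psi> g) (\<Psi> h) = l2dist g h"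
    and "bij_betw \<sigma> tcosets tcosets"
    and "C' \<ge> 0"
    and "\<forall>g\<in>L2. hausdorff (\<Psi> ` tcoset g) (\<sigma> (tcoset g)) < ereal C'"
  shows "\<exists>z k. (z, k) \<in> L2 \<and>
           ((\<forall>x\<in>Bset. \<sigma> (tcoset (x, 0)) = tcoset (lam_map (z, k) x, 0)) \<or>
            (\<forall>x\<in>Bset. \<sigma> (tcoset (x, 0)) = tcoset (lam_map (z, k) (iota x), 0)))"
proof -
  have "\<exists>y\<in>Bset. \<sigma> (tcoset (x, 0)) = tcoset (y, 0)" if "x \<in> Bset" for x
  proof -
    have "tcoset (x, 0) \<in> tcosets" using that by (simp add: tcosets_def L2_def)
    then show ?thesis using assms(3) bij_betwE tcosets_representative by blast
  qed
  then obtain psi where psi: "\<And>x. x \<in> Bset \<Longrightarrow> psi x \<in> Bset \<and> \<sigma> (tcoset (x, 0)) = tcoset (psi x, 0)"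
    by metis
  have "\<exists>b\<in>L2. fst b = psi x \<and> l2dist (\<Psi> (x, n)) b \<le> nat \<lceil>C'\<rceil>" if "x \<in> Bset" for x n
  proof -
    have "(x, 0) \<in> L2" using that by (simp add: L2_def)
    moreover have "\<Psi> (x, n) \<in> \<Psi> ` tcoset (x, 0)" by (simp add: tcoset_eq)
    ultimately obtain b where b: "b \<in> \<sigma> (tcoset (x, 0))" "real (l2dist (\<Psi> (x, n)) b) < C'"
      using hausdorff_less_imp_near assms(5) by blast
    then have "l2dist (\<Psi> (x, n)) b \<le> nat \<lceil>C'\<rceil>" by linarith
    then show ?thesis
      using b(1) psi[OF that] by (intro bexI[of _ b]) (auto simp: tcoset_eq L2_def mem_Times_iff)
  qed
  then interpret pattern_preserving_isometry \<Psi> psi "nat \<lceil>C'\<rceil>"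
    using assms(1,2) by unfold_locales
  obtain z k where "(z, k) \<in> L2"
    "(\<forall>x\<in>Bset. psi x = lam_map (z, k) x) \<or> (\<forall>x\<in>Bset. psi x = lam_map (z, k) (iota x))"
    using psi_affine_or_reflected by blast
  then show ?thesis
    using psi by (intro exI[of _ z] exI[of _ k]) auto
qed

end
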